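(* Let $G=(V,E)$ be a graph with edge set partitioned into color classes $E_1,\dots,E_k$, all color bounds equal to $1$, and consider the natural LP relaxation $\mathcal{M}_c=\{x\in[0,1]^E:\ \sum_{e\in\delta(v)}x_e\le 1\ \forall v\in V,\ \sum_{e\in E_j}x_e\le 1\ \forall j\}$. Then after 2 rounds of the Sherali–Adams hierarchy applied to $\mathcal{M}_c$, every bi-chromatic constraint is implied: every $x\in F_2$ satisfies $\sum_{e\in BC}x_e\le 1$ for every bi-chromatic 4-cycle $BC$ of $G$.
   Context: A bi-chromatic 4-cycle is a cycle $e_1,e_3,e_2,e_4$ of length 4 in $G$ whose edges alternate between two color classes (two opposite edges $e_1,e_2$ in one class, the other two $e_3,e_4$ in another class). $\delta(v)$ is the set of edges incident to $v$. Sherali–Adams hierarchy: for $F_0=\{x\in[0,1]^n: a_i^Tx\le b_i\}$ (box constraints $x_j\ge0$, $1-x_j\ge0$ included), the level-$\psi$ lifted system has variables $y_Z$, $Z\subseteq[n]$, $y_\emptyset=1$, and for all disjoint $\Gamma,\Delta\subseteq[n]$ with $|\Gamma|+|\Delta|\le\psi$ the constraints $\sum_{H\subseteq\Delta}(-1)^{|H|}(b_i y_{\Gamma\cup H}-\sum_j a_{ij}y_{\Gamma\cup H\cup\{j\}})\ge0$ for each $i$ and $\sum_{H\subseteq\Delta}(-1)^{|H|}y_{\Gamma\cup H}\ge 0$ (linearizations of products of constraints with $\prod_{\gamma\in\Gamma}x_\gamma\prod_{\delta\in\Delta}(1-x_\delta)$, using $x_i^2=x_i$ and $\prod_{\zeta\in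 Z}x_\zeta\mapsto y_Z$); $F_\psi$ is the projection onto $y_{\{i\}}=x_i$. *)

theory Defs
  imports Complex_Main
begin

text \<open>Sherali-Adams level-psi projection of the polytope
  {x. a^T x <= b for all rows (a,b) in P}, variables indexed by the finite set N.
  The box constraints must be included among the rows P.
  y Z stands for the linearization of the product of x_z, z in Z.\<close>
definition SA :: "'i set \<Rightarrow> (('i \<Rightarrow> real) \<times> real) set \<Rightarrow> nat \<Rightarrow> ('i \<Rightarrow> real) set" where
  "SA N P \<psi> = {x. \<exists>y :: 'i set \<Rightarrow> real.
      y {} = 1 \<and> (\<forall>i\<in>N. y {i} = x i) \<and>
      (\<forall>\<Gamma> \<Delta>. \<Gamma> \<subseteq> N \<longrightarrow> \<Delta> \<subseteq> N \<longrightarrow> \<Gamma> \<inter> \<Delta> = {} \<longrightarrow> card \<Gamma> + card \<Delta> \<le> \<psi> \<longrightarrow>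
         (\<forall>(a, b)\<in>P. (\<Sum>H\<in>Pow \<Delta>. (-1) ^ card H *
               (b * y (\<Gamma> \<union> H) - (\<Sum>j\<in>N. a j * y (\<Gamma> \<union> H \<union> {j})))) \<ge> 0) \<and>
         (\<Sum>H\<in>Pow \<Delta>. (-1) ^ card H * y (\<Gamma> \<union> H)) \<ge> 0)}"

text \<open>Rows of the natural LP relaxation M_c (all colour bounds 1) of a graph with
  vertex set V, edge set E (edges are 2-element vertex sets) and colouring col;
  colour classes are the fibres of col on E.\<close>
definition Mc_rows :: "'v set \<Rightarrow> 'v set set \<Rightarrow> ('v set \<Rightarrow> 'c) \<Rightarrow> (('v set \<Rightarrow> real) \<times> real) set" where
  "Mc_rows V E col =
     {((\<lambda>e. if v \<in> e then 1 else 0), 1) | v. v \<in> V} \<union>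
     {((\<lambda>e. if col e = c then 1 else 0), 1) | c. c \<in> col ` E} \<union>
     {((\<lambda>e. if e = f then -1 else 0), 0) | f. f \<in> E} \<union>
     {((\<lambda>e. if e = f then 1 else 0), 1) | f. f \<in> E}"

definition bichromatic_4cycle ::
  "'v set set \<Rightarrow> ('v set \<Rightarrow> 'c) \<Rightarrow> 'v set \<Rightarrow> 'v set \<Rightarrow> 'v set \<Rightarrow> 'v set \<Rightarrow> bool" where
  "bichromatic_4cycle E col e1 e3 e2 e4 \<longleftrightarrow>
     (\<exists>a b c d. distinct [a, b, c, d] \<and>
        e1 = {a, b} \<and> e3 = {b, c} \<and> e2 = {c, d} \<and> e4 = {d, a}) \<and>
     e1 \<in> E \<and> e2 \<in> E \<and> e3 \<in> E \<and> e4 \<in> E \<and>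
     col e1 = col e2 \<and> col e3 = col e4 \<and> col e1 \<noteq> col e3"

end

theory Submission
  imports Defs
begin

text \<open>At level 2 the lifted vector y linearizes all products of at most two constraints. Multiplying
  a packing constraint by x_f shows y {e, f} = 0 whenever e and f lie in a common packing
  constraint. For the cycle e1, e3, e2, e4, multiply the colour constraint of e3, e4 by
  (1 - x_e1)(1 - x_e2): the right-hand side linearizes to 1 - x_e1 - x_e2 + y {e1, e2}, and
  every term on the left is nonnegative (it is the product of a box constraint x_j \<ge> 0 with
  the same factors); the terms for e3 and e4 are at least x_e3 and x_e4, because their
  corrections y {e1, e3}, y {e2, e3}, y {e1, e4}, y {e2, e4} and y {e1, e2} vanish.\<close>

text \<open>The linearization of the product of the x_i, i in \<Gamma>, and the 1 - x_i, i in \<Delta>.\<close>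
definition SA_lin :: "('i set \<Rightarrow> real) \<Rightarrow> 'i set \<Rightarrow> 'i set \<Rightarrow> real" where
  "SA_lin y \<Gamma> \<Delta> = (\<Sum>H\<in>Pow \<Delta>. (-1) ^ card H * y (\<Gamma> \<union> H))"

lemma SA_lin_empty [simp]: "SA_lin y \<Gamma> {} = y \<Gamma>"
  by (simp add: SA_lin_def)

lemma SA_lin_doubleton:
  assumes "a \<noteq> b"
  shows "SA_lin y \<Gamma> {a, b} = y \<Gamma> - y (insert a \<Gamma>) - y (insert b \<Gamma>) + y (insert a (insert b \<Gamma>))"
proof -
  have "Pow {a, b} = {{}, {a}, {b}, {a, b}}"
    by (auto simp: Pow_insert)
  then show ?thesis
    using assms by (simp add: SA_lin_def doubleton_eq_iff insert_commute)
qed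

definition share_packing_row :: "(('i \<Rightarrow> real) \<times> real) set \<Rightarrow> 'i \<Rightarrow> 'i \<Rightarrow> bool" where
  "share_packing_row P e f \<longleftrightarrow> (\<exists>Q. ((\<lambda>j. if Q j then 1 else 0), 1) \<in> P \<and> Q e \<and> Q f)"

locale SA_lifting =
  fixes N :: "'i set" and P :: "(('i \<Rightarrow> real) \<times> real) set" and \<psi> :: nat
    and y :: "'i set \<Rightarrow> real"
  assumes finite_N: "finite N"
    and row_product_ineq: "\<lbrakk>\<Gamma> \<subseteq> N; \<Delta> \<subseteq> N; \<Gamma> \<inter> \<Delta> = {}; card \<Gamma> + card \<Delta> \<le> \<psi>; (a, b) \<in> P\<rbrakk> \<Longrightarrow>
      0 \<le> (\<Sum>H\<in>Pow \<Delta>. (-1) ^ card H * (b * y (\<Gamma> \<union> H) - (\<Sum>j\<in>N. a j * y (\<Gamma> \<union> H \<union> {j}))))"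
    and SA_lin_nonneg: "\<lbrakk>\<Gamma> \<subseteq> N; \<Delta> \<subseteq> N; \<Gamma> \<inter> \<Delta> = {}; card \<Gamma> + card \<Delta> \<le> \<psi>\<rbrakk> \<Longrightarrow>
      0 \<le> SA_lin y \<Gamma> \<Delta>"

lemma SA_obtain_lifting:
  assumes "finite N" and "x \<in> SA N P \<psi>"
  obtains y where "SA_lifting N P \<psi> y" and "y {} = 1" and "\<And>i. i \<in> N \<Longrightarrow> y {i} = x i"
proof -
  obtain y where "y {} = 1" and "\<forall>i\<in>N. y {i} = x i"
    and C: "\<forall>\<Gamma> \<Delta>. \<Gamma> \<subseteq> N \<longrightarrow> \<Delta> \<subseteq> N \<longrightarrow> \<Gamma> \<inter> \<Delta> = {} \<longrightarrow> card \<Gamma> + card \<Delta> \<le> \<psi> \<longrightarrow>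
      (\<forall>(a, b)\<in>P. (\<Sum>H\<in>Pow \<Delta>. (-1) ^ card H *
          (b * y (\<Gamma> \<union> H) - (\<Sum>j\<in>N. a j * y (\<Gamma> \<union> H \<union> {j})))) \<ge> 0) \<and>
      (\<Sum>H\<in>Pow \<Delta>. (-1) ^ card H * y (\<Gamma> \<union> H)) \<ge> 0"
    using assms(2) unfolding SA_def by blast
  moreover have "SA_lifting N P \<psi> y"
  proof
    show "finite N"
      by (rule assms(1))
  next
    fix \<Gamma> \<Delta> :: "'a set" and a b
    assume "\<Gamma> \<subseteq> N" "\<Delta> \<subseteq> N" "\<Gamma> \<inter> \<Delta> = {}" "card \<Gamma> + card \<Delta> \<le> \<psi>" "(a, b) \<in> P"
    then show "0 \<le> (\<Sum>H\<in>Pow \<Delta>. (-1) ^ card H * (b * y (\<Gamma> \<union> H) - (\<Sum>j\<in>N. a j * y (\<Gamma> \<union> H \<union> {j}))))"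
      using C by blast
  next
    fix \<Gamma> \<Delta> :: "'a set"
    assume "\<Gamma> \<subseteq> N" "\<Delta> \<subseteq> N" "\<Gamma> \<inter> \<Delta> = {}" "card \<Gamma> + card \<Delta> \<le> \<psi>"
    then show "0 \<le> SA_lin y \<Gamma> \<Delta>"
      using C by (simp add: SA_lin_def)
  qed
  ultimately show ?thesis
    using that by blast
qed

context SA_lifting
begin

lemma row_ineq:
  assumes "\<Gamma> \<subseteq> N" "\<Delta> \<subseteq> N" "\<Gamma> \<inter> \<Delta> = {}" "card \<Gamma> + card \<Delta> \<le> \<psi>" "(a, b) \<in> P"
  shows "(\<Sum>j\<in>N. a j * SA_lin y (insert j \<Gamma>) \<Delta>) \<le> b * SA_lin y \<Gamma> \<Delta>"
proof -
  have "(\<Sum>H\<in>Pow \<Delta>. (-1) ^ card H * (\<Sum>j\<in>N. a j * y (\<Gamma> \<union> H \<union> {j})))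
      = (\<Sum>j\<in>N. a j * SA_lin y (insert j \<Gamma>) \<Delta>)"
    unfolding SA_lin_def sum_distrib_left
    by (subst sum.swap) (simp add: mult.left_commute)
  moreover have "(\<Sum>H\<in>Pow \<Delta>. (-1) ^ card H * (b * y (\<Gamma> \<union> H) - (\<Sum>j\<in>N. a j * y (\<Gamma> \<union> H \<union> {j}))))
      = b * SA_lin y \<Gamma> \<Delta> - (\<Sum>H\<in>Pow \<Delta>. (-1) ^ card H * (\<Sum>j\<in>N. a j * y (\<Gamma> \<union> H \<union> {j})))"
    unfolding SA_lin_def right_diff_distrib sum_subtractf sum_distrib_left
    by (simp add: mult.left_commute)
  ultimately show ?thesis
    using row_product_ineq[OF assms] by simp
qed

lemma SA_lin_insert_nonneg:
  assumes "\<Gamma> \<subseteq> N" "\<Delta> \<subseteq> N" "\<Gamma> \<inter> \<Delta> = {}" "card \<Gamma> + card \<Delta> \<le> \<psi>"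
    and "f \<in> N" and "((\<lambda>e. if e = f then -1 else 0), 0) \<in> P"
  shows "0 \<le> SA_lin y (insert f \<Gamma>) \<Delta>"
proof -
  have "(\<Sum>j\<in>N. (if j = f then -1 else 0) * SA_lin y (insert j \<Gamma>) \<Delta>) = - SA_lin y (insert f \<Gamma>) \<Delta>"
    using finite_N \<open>f \<in> N\<close> by (simp add: if_distrib if_distribR sum.delta cong: if_cong)
  then show ?thesis
    using row_ineq[OF assms(1-4,6)] by simp
qed

lemma packing_row_ineq:
  assumes "\<Gamma> \<subseteq> N" "\<Delta> \<subseteq> N" "\<Gamma> \<inter> \<Delta> = {}" "card \<Gamma> + card \<Delta> \<le> \<psi>"
    and "((\<lambda>e. if Q e then 1 else 0), 1) \<in> P"
  shows "(\<Sum>j\<in>{j\<in>N. Q j}. SA_lin y (insert j \<Gamma>) \<Delta>) \<le> SA_lin y \<Gamma> \<Delta>"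
  using row_ineq[OF assms] finite_N
  by (simp add: if_distrib if_distribR sum.inter_filter cong: if_cong)

lemma share_packing_row_pair_le0:
  assumes "2 \<le> \<psi>" and "share_packing_row P e f" and "e \<in> N" "f \<in> N" "e \<noteq> f"
  shows "y {e, f} \<le> 0"
proof -
  obtain Q where row: "((\<lambda>j. if Q j then 1 else 0), 1) \<in> P" and "Q e" "Q f"
    using assms(2) unfolding share_packing_row_def by blast
  have nonneg: "0 \<le> y (insert j {e})" if "j \<in> N" for j
    using SA_lin_nonneg[of "insert j {e}" "{}"] that assms(1,3) by (cases "j = e") auto
  have "(\<Sum>j\<in>{e, f}. y (insert j {e})) \<le> (\<Sum>j\<in>{j\<in>N. Q j}. y (insert j {e}))"
    by (rule sum_mono2) (use finite_N assms \<open>Q e\<close> \<open>Q f\<close> nonneg in auto)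
  also have "\<dots> \<le> y {e}"
    using packing_row_ineq[OF _ _ _ _ row, of "{e}" "{}"] assms by simp
  finally show ?thesis
    using assms(5) by (simp add: insert_commute)
qed

lemma four_pairwise_packed_le1:
  assumes "2 \<le> \<psi>" and "y {} = 1"
    and nonneg_rows: "\<And>f. f \<in> N \<Longrightarrow> ((\<lambda>e. if e = f then -1 else 0), 0) \<in> P"
    and in_N: "e1 \<in> N" "e2 \<in> N" "e3 \<in> N" "e4 \<in> N" and "distinct [e1, e2, e3, e4]"
    and "share_packing_row P e1 e2" "share_packing_row P e3 e4"
    and "share_packing_row P e1 e3" "share_packing_row P e2 e3"
    and "share_packing_row P e1 e4" "share_packing_row P e2 e4"
  shows "y {e1} + y {e3} + y {e2} + y {e4} \<le> 1"
proof -
  define D where "D = {e1, e2}"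
  have D: "D \<subseteq> N" "card D \<le> \<psi>" "e1 \<noteq> e2"
    using assms by (auto simp: D_def)
  have "y {e1, e2} \<le> 0"
    using share_packing_row_pair_le0 assms by simp
  then have upper: "SA_lin y {} D \<le> 1 - y {e1} - y {e2}"
    using \<open>y {} = 1\<close> by (simp add: D_def SA_lin_doubleton[OF D(3)])
  have lower: "y {e} \<le> SA_lin y {e} D"
    if "e \<in> N" "e \<notin> D" "share_packing_row P e1 e" "share_packing_row P e2 e" for e
  proof -
    have "y {e1, e} \<le> 0" "y {e2, e} \<le> 0"
      using share_packing_row_pair_le0 that assms(1) D by (auto simp: D_def)
    moreover have "0 \<le> SA_lin y (insert e D) {}"
      using SA_lin_insert_nonneg[of D "{}" e] that D nonneg_rows by simp
    ultimately show ?thesis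
      by (simp add: D_def SA_lin_doubleton[OF D(3)] insert_commute)
  qed
  obtain Q where row: "((\<lambda>j. if Q j then 1 else 0), 1) \<in> P" and "Q e3" "Q e4"
    using \<open>share_packing_row P e3 e4\<close> unfolding share_packing_row_def by blast
  have "(\<Sum>j\<in>{e3, e4}. SA_lin y {j} D) \<le> (\<Sum>j\<in>{j\<in>N. Q j}. SA_lin y {j} D)"
    by (rule sum_mono2)
      (use finite_N in_N \<open>Q e3\<close> \<open>Q e4\<close> SA_lin_insert_nonneg[of "{}" D] D nonneg_rows in auto)
  also have "\<dots> \<le> SA_lin y {} D"
    using packing_row_ineq[OF _ _ _ _ row, of "{}" D] D by simp
  moreover have "y {e3} \<le> SA_lin y {e3} D" "y {e4} \<le> SA_lin y {e4} D"
    using lower assms by (auto simp: D_def)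
  ultimately show ?thesis
    using upper \<open>distinct [e1, e2, e3, e4]\<close> by simp
qed

end

lemma Mc_rows_nonneg_row: "f \<in> E \<Longrightarrow> ((\<lambda>e. if e = f then -1 else 0), 0) \<in> Mc_rows V E col"
  unfolding Mc_rows_def by blast

lemma share_packing_row_vertex:
  assumes "v \<in> V" "v \<in> e" "v \<in> f"
  shows "share_packing_row (Mc_rows V E col) e f"
proof -
  have "((\<lambda>j. if v \<in> j then 1 else 0), 1) \<in> Mc_rows V E col"
    using assms(1) unfolding Mc_rows_def by blast
  then show ?thesis
    using assms unfolding share_packing_row_def by blast
qed

lemma share_packing_row_colour:
  assumes "e \<in> E" "col e = col f"
  shows "share_packing_row (Mc_rows V E col) e f"
proof -
  have "((\<lambda>j. if col j = col e then 1 else 0), 1) \<in> Mc_rows V E col"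
    using assms(1) unfolding Mc_rows_def by blast
  then show ?thesis
    using assms(2) unfolding share_packing_row_def by (intro exI[of _ "\<lambda>j. col j = col e"]) simp
qed

lemma bichromatic_4cycle_packed:
  assumes "E \<subseteq> Pow V" and "bichromatic_4cycle E col e1 e3 e2 e4"
  shows "distinct [e1, e2, e3, e4]"
    and "share_packing_row (Mc_rows V E col) e1 e2" "share_packing_row (Mc_rows V E col) e3 e4"
    and "share_packing_row (Mc_rows V E col) e1 e3" "share_packing_row (Mc_rows V E col) e2 e3"
    and "share_packing_row (Mc_rows V E col) e1 e4" "share_packing_row (Mc_rows V E col) e2 e4"
proof -
  obtain a b c d where "distinct [a, b, c, d]"
    and e: "e1 = {a, b}" "e3 = {b, c}" "e2 = {c, d}" "e4 = {d, a}"
    and in_E: "e1 \<in> E" "e2 \<in> E" "e3 \<in> E" "e4 \<in> E"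
    and "col e1 = col e2" "col e3 = col e4"
    using assms(2) unfolding bichromatic_4cycle_def by blast
  then show "distinct [e1, e2, e3, e4]"
    by (auto simp: doubleton_eq_iff)
  show "share_packing_row (Mc_rows V E col) e1 e2" "share_packing_row (Mc_rows V E col) e3 e4"
    using in_E \<open>col e1 = col e2\<close> \<open>col e3 = col e4\<close> by (blast intro: share_packing_row_colour)+
  have "a \<in> V" "b \<in> V" "c \<in> V" "d \<in> V"
    using assms(1) in_E e by blast+
  then show "share_packing_row (Mc_rows V E col) e1 e3" "share_packing_row (Mc_rows V E col) e2 e3"
    "share_packing_row (Mc_rows V E col) e1 e4" "share_packing_row (Mc_rows V E col) e2 e4"
    unfolding e by (blast intro: share_packing_row_vertex)+
qed

theorem mainTheorem6:
  fixes V :: "'v set" and E :: "'v set set" and col :: "'v set \<Rightarrow> 'c"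
    and x :: "'v set \<Rightarrow> real" and e1 e2 e3 e4 :: "'v set"
  assumes "finite V"
    and "E \<subseteq> {{u, v} | u v. u \<in> V \<and> v \<in> V \<and> u \<noteq> v}"
    and "x \<in> SA E (Mc_rows V E col) 2"
    and "bichromatic_4cycle E col e1 e3 e2 e4"
  shows "x e1 + x e3 + x e2 + x e4 \<le> 1"
proof -
  have "E \<subseteq> Pow V"
    using assms(2) by blast
  then have "finite E"
    using assms(1) finite_subset by blast
  then obtain y where "SA_lifting E (Mc_rows V E col) 2 y" and "y {} = 1"
    and y_x: "\<And>i. i \<in> E \<Longrightarrow> y {i} = x i"
    using SA_obtain_lifting assms(3) by blast
  then interpret SA_lifting E "Mc_rows V E col" 2 y
    by simp
  have in_E: "e1 \<in> E" "e2 \<in> E" "e3 \<in> E" "e4 \<in> E"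
    using assms(4) unfolding bichromatic_4cycle_def by blast+
  have "y {e1} + y {e3} + y {e2} + y {e4} \<le> 1"
    using four_pairwise_packed_le1[OF _ \<open>y {} = 1\<close> Mc_rows_nonneg_row in_E]
      bichromatic_4cycle_packed[OF \<open>E \<subseteq> Pow V\<close> assms(4)]
    by simp
  then show ?thesis
    using y_x in_E by simp
qed

end
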